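(* Let $\mathbf{U}$ be a countable structure that has a universal homogeneous endomorphism. Then $\mathbf{U}$ is homogeneous if and only if $\mathbf{U}$ is homomorphism homogeneous.
   Context: An embedding is an injective homomorphism reflecting all relations. $\operatorname{Age}(\mathbf{U})$ is the class of finitely generated structures embeddable in $\mathbf{U}$, and $\overline{\operatorname{Age}(\mathbf{U})}$ is the class of countable structures all of whose finitely generated substructures embed into $\mathbf{U}$. A structure is homogeneous if every isomorphism between finitely generated substructures extends to an automorphism, and homomorphism homogeneous if every homomorphism between finitely generated substructures extends to an endomorphism. A universal homogeneous endomorphism of $\mathbf{U}$ is an endomorphism $u$ such that for every $\mathbf{A}\in\overline{\operatorname{Age}(\mathbf{U})}$ and homomorphism $h:\mathbf{A}\to\mathbf{U}$ there is an embedding $\iota:\mathbf{A}\hookrightarrow\mathbf{U}$ with $h=u\circ\iota$, and for every finitely generated $\mathbf{A}\le\mathbf{U}$ and embedding $\iota:\mathbf{A}\hookrightarrow\mathbf{U}$ with $u\circ\iota=u\restriction_A$ there is an automorphism $\alpha$ of $\mathbf{U}$ with $u\circ\alpha=u$ and $\alpha\restriction_A=\iota$. *)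

theory Defs
  imports Main "HOL-Library.Countable_Set"
begin

text \<open>First-order structures over a signature given by arity functions
  fa (function symbols 'f) and ra (relation symbols 'r).
  Tuples are lists; only tuples of the right length with entries in the carrier matter.\<close>

record ('a, 'f, 'r) struct =
  carrier :: "'a set"
  fun_of :: "'f \<Rightarrow> 'a list \<Rightarrow> 'a"
  rel_of :: "'r \<Rightarrow> 'a list \<Rightarrow> bool"

definition tuples :: "'a set \<Rightarrow> nat \<Rightarrow> 'a list set" where
  "tuples S n = {xs. length xs = n \<and> set xs \<subseteq> S}"

definition closed_under :: "('f \<Rightarrow> nat) \<Rightarrow> ('a, 'f, 'r) struct \<Rightarrow> 'a set \<Rightarrow> bool" where
  "closed_under fa U C \<longleftrightarrow> (\<forall>f. \<forall>xs \<in> tuples C (fa f). fun_of U f xs \<in> C)"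

definition is_struct :: "('f \<Rightarrow> nat) \<Rightarrow> ('r \<Rightarrow> nat) \<Rightarrow> ('a, 'f, 'r) struct \<Rightarrow> bool" where
  "is_struct fa ra A \<longleftrightarrow> closed_under fa A (carrier A)"

definition is_hom :: "('f \<Rightarrow> nat) \<Rightarrow> ('r \<Rightarrow> nat) \<Rightarrow> ('a, 'f, 'r) struct \<Rightarrow> ('b, 'f, 'r) struct
    \<Rightarrow> ('a \<Rightarrow> 'b) \<Rightarrow> bool" where
  "is_hom fa ra A B h \<longleftrightarrow>
     (\<forall>x \<in> carrier A. h x \<in> carrier B) \<and>
     (\<forall>f. \<forall>xs \<in> tuples (carrier A) (fa f). h (fun_of A f xs) = fun_of B f (map h xs)) \<and>
     (\<forall>r. \<forall>xs \<in> tuples (carrier A) (ra r). rel_of A r xs \<longrightarrow> rel_of B r (map h xs))"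

definition is_emb :: "('f \<Rightarrow> nat) \<Rightarrow> ('r \<Rightarrow> nat) \<Rightarrow> ('a, 'f, 'r) struct \<Rightarrow> ('b, 'f, 'r) struct
    \<Rightarrow> ('a \<Rightarrow> 'b) \<Rightarrow> bool" where
  "is_emb fa ra A B h \<longleftrightarrow> is_hom fa ra A B h \<and> inj_on h (carrier A) \<and>
     (\<forall>r. \<forall>xs \<in> tuples (carrier A) (ra r). rel_of B r (map h xs) \<longrightarrow> rel_of A r xs)"

definition is_iso :: "('f \<Rightarrow> nat) \<Rightarrow> ('r \<Rightarrow> nat) \<Rightarrow> ('a, 'f, 'r) struct \<Rightarrow> ('b, 'f, 'r) struct
    \<Rightarrow> ('a \<Rightarrow> 'b) \<Rightarrow> bool" where
  "is_iso fa ra A B h \<longleftrightarrow> is_emb fa ra A B h \<and> h ` carrier A = carrier B"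

definition is_endo :: "('f \<Rightarrow> nat) \<Rightarrow> ('r \<Rightarrow> nat) \<Rightarrow> ('a, 'f, 'r) struct \<Rightarrow> ('a \<Rightarrow> 'a) \<Rightarrow> bool" where
  "is_endo fa ra U h \<longleftrightarrow> is_hom fa ra U U h"

definition is_aut :: "('f \<Rightarrow> nat) \<Rightarrow> ('r \<Rightarrow> nat) \<Rightarrow> ('a, 'f, 'r) struct \<Rightarrow> ('a \<Rightarrow> 'a) \<Rightarrow> bool" where
  "is_aut fa ra U h \<longleftrightarrow> is_iso fa ra U U h"

definition substructure :: "('f \<Rightarrow> nat) \<Rightarrow> ('r \<Rightarrow> nat) \<Rightarrow> ('a, 'f, 'r) struct \<Rightarrow> ('a, 'f, 'r) struct \<Rightarrow> bool" where
  "substructure fa ra A U \<longleftrightarrow> carrier A \<subseteq> carrier U \<and> closed_under fa U (carrier A) \<and>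
     (\<forall>f. \<forall>xs \<in> tuples (carrier A) (fa f). fun_of A f xs = fun_of U f xs) \<and>
     (\<forall>r. \<forall>xs \<in> tuples (carrier A) (ra r). rel_of A r xs = rel_of U r xs)"

definition generated :: "('f \<Rightarrow> nat) \<Rightarrow> ('a, 'f, 'r) struct \<Rightarrow> 'a set \<Rightarrow> 'a set" where
  "generated fa A S = \<Inter>{C. S \<subseteq> C \<and> C \<subseteq> carrier A \<and> closed_under fa A C}"

definition fin_gen :: "('f \<Rightarrow> nat) \<Rightarrow> ('a, 'f, 'r) struct \<Rightarrow> bool" where
  "fin_gen fa A \<longleftrightarrow> (\<exists>S. finite S \<and> S \<subseteq> carrier A \<and> generated fa A S = carrier A)"

definition in_age :: "('f \<Rightarrow> nat) \<Rightarrow> ('r \<Rightarrow> nat) \<Rightarrow> ('a, 'f, 'r) struct \<Rightarrow> ('b, 'f, 'r) struct \<Rightarrow> bool" where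
  "in_age fa ra U B \<longleftrightarrow> is_struct fa ra B \<and> fin_gen fa B \<and> (\<exists>e. is_emb fa ra B U e)"

text \<open>Countable structures are represented (up to isomorphism) with carrier a set of
  natural numbers.\<close>
definition in_age_closure :: "('f \<Rightarrow> nat) \<Rightarrow> ('r \<Rightarrow> nat) \<Rightarrow> ('a, 'f, 'r) struct \<Rightarrow> (nat, 'f, 'r) struct \<Rightarrow> bool" where
  "in_age_closure fa ra U A \<longleftrightarrow> is_struct fa ra A \<and>
     (\<forall>B. substructure fa ra B A \<and> fin_gen fa B \<longrightarrow> in_age fa ra U B)"

definition universal_homogeneous_endo ::
    "('f \<Rightarrow> nat) \<Rightarrow> ('r \<Rightarrow> nat) \<Rightarrow> ('a, 'f, 'r) struct \<Rightarrow> ('a \<Rightarrow> 'a) \<Rightarrow> bool" where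
  "universal_homogeneous_endo fa ra U u \<longleftrightarrow>
     is_endo fa ra U u \<and>
     (\<forall>(A :: (nat, 'f, 'r) struct) h. in_age_closure fa ra U A \<and> is_hom fa ra A U h \<longrightarrow>
        (\<exists>\<iota>. is_emb fa ra A U \<iota> \<and> (\<forall>x \<in> carrier A. h x = u (\<iota> x)))) \<and>
     (\<forall>A \<iota>. substructure fa ra A U \<and> fin_gen fa A \<and> is_emb fa ra A U \<iota> \<and>
           (\<forall>x \<in> carrier A. u (\<iota> x) = u x) \<longrightarrow>
        (\<exists>\<alpha>. is_aut fa ra U \<alpha> \<and> (\<forall>x \<in> carrier U. u (\<alpha> x) = u x) \<and>
             (\<forall>x \<in> carrier A. \<alpha> x = \<iota> x)))"

definition homogeneous :: "('f \<Rightarrow> nat) \<Rightarrow> ('r \<Rightarrow> nat) \<Rightarrow> ('a, 'f, 'r) struct \<Rightarrow> bool" where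
  "homogeneous fa ra U \<longleftrightarrow>
     (\<forall>A B i. substructure fa ra A U \<and> fin_gen fa A \<and> substructure fa ra B U \<and> fin_gen fa B \<and>
        is_iso fa ra A B i \<longrightarrow> (\<exists>\<alpha>. is_aut fa ra U \<alpha> \<and> (\<forall>x \<in> carrier A. \<alpha> x = i x)))"

definition hom_homogeneous :: "('f \<Rightarrow> nat) \<Rightarrow> ('r \<Rightarrow> nat) \<Rightarrow> ('a, 'f, 'r) struct \<Rightarrow> bool" where
  "hom_homogeneous fa ra U \<longleftrightarrow>
     (\<forall>A B h. substructure fa ra A U \<and> fin_gen fa A \<and> substructure fa ra B U \<and> fin_gen fa B \<and>
        is_hom fa ra A B h \<longrightarrow> (\<exists>e. is_endo fa ra U e \<and> (\<forall>x \<in> carrier A. e x = h x)))"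

end

theory Submission
  imports Defs
begin

text \<open>If \<open>U\<close> is homogeneous, factor a homomorphism \<open>h\<close> from a finitely generated substructure
  as \<open>u \<circ> \<iota>\<close> with \<open>\<iota>\<close> an embedding, extend \<open>\<iota>\<close> to an automorphism \<open>\<alpha>\<close>; then \<open>u \<circ> \<alpha>\<close> extends \<open>h\<close>.
  Conversely, if \<open>U\<close> is homomorphism homogeneous and \<open>i\<close> is an isomorphism between finitely
  generated substructures, extend \<open>u \<circ> i\<close> to an endomorphism and factor it as \<open>u \<circ> \<kappa>\<close> with \<open>\<kappa>\<close> a
  self-embedding. As \<open>\<kappa>\<close> and \<open>i\<close> agree up to \<open>u\<close>, the homogeneity clause for \<open>u\<close> corrects \<open>\<kappa>\<close>
  by an automorphism into a self-embedding extending \<open>i\<close>. Applied to finitely generated partial isomorphisms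
  and their inverses, this drives a back-and-forth construction of an automorphism extending \<open>i\<close>.\<close>

definition induced :: "('a, 'f, 'r) struct \<Rightarrow> 'a set \<Rightarrow> ('a, 'f, 'r) struct" where
  "induced U C = \<lparr>carrier = C, fun_of = fun_of U, rel_of = rel_of U\<rparr>"

lemma induced_simps [simp]:
  "carrier (induced U C) = C" "fun_of (induced U C) = fun_of U" "rel_of (induced U C) = rel_of U"
  by (simp_all add: induced_def)

lemma tuples_mono: "S \<subseteq> T \<Longrightarrow> xs \<in> tuples S n \<Longrightarrow> xs \<in> tuples T n"
  by (auto simp: tuples_def)

lemma tuples_map: "xs \<in> tuples S n \<Longrightarrow> (\<And>x. x \<in> S \<Longrightarrow> h x \<in> T) \<Longrightarrow> map h xs \<in> tuples T n"
  by (auto simp: tuples_def)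

lemma tuples_inv_into:
  assumes "ys \<in> tuples (h ` S) n"
  shows "map (inv_into S h) ys \<in> tuples S n" "map h (map (inv_into S h) ys) = ys"
  using assms by (auto simp: tuples_def inv_into_into f_inv_into_f intro!: map_idI)

lemma generated_least:
  "S \<subseteq> X \<Longrightarrow> X \<subseteq> carrier U \<Longrightarrow> closed_under fa U X \<Longrightarrow> generated fa U S \<subseteq> X"
  unfolding generated_def by blast

lemma generated_superset: "S \<subseteq> generated fa U S"
  unfolding generated_def by blast

lemma generated_subset_carrier:
  "is_struct fa ra U \<Longrightarrow> S \<subseteq> carrier U \<Longrightarrow> generated fa U S \<subseteq> carrier U"
  unfolding generated_def is_struct_def by blast

lemma closed_under_generated: "closed_under fa U (generated fa U S)"
  unfolding closed_under_def
proof (intro allI ballI)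
  fix f xs assume xs: "xs \<in> tuples (generated fa U S) (fa f)"
  have "fun_of U f xs \<in> C" if C: "S \<subseteq> C \<and> C \<subseteq> carrier U \<and> closed_under fa U C" for C
  proof -
    have "generated fa U S \<subseteq> C" using C by (intro generated_least) auto
    with xs C show ?thesis by (auto simp: closed_under_def dest: tuples_mono)
  qed
  then show "fun_of U f xs \<in> generated fa U S" unfolding generated_def by blast
qed

lemma generated_mono:
  "is_struct fa ra U \<Longrightarrow> S \<subseteq> T \<Longrightarrow> T \<subseteq> carrier U \<Longrightarrow> generated fa U S \<subseteq> generated fa U T"
  using generated_superset[of T fa U] generated_subset_carrier[of fa ra U T]
    closed_under_generated[of fa U T]
  by (intro generated_least[of S "generated fa U T"]) auto

lemma substructure_is_struct: "substructure fa ra A U \<Longrightarrow> is_struct fa ra A"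
  unfolding substructure_def is_struct_def closed_under_def by auto

lemma substructure_refl: "is_struct fa ra U \<Longrightarrow> substructure fa ra U U"
  unfolding substructure_def is_struct_def by auto

lemma induced_substructure:
  "C \<subseteq> carrier U \<Longrightarrow> closed_under fa U C \<Longrightarrow> substructure fa ra (induced U C) U"
  unfolding substructure_def by auto

lemma induced_carrier_substructure:
  "substructure fa ra A U \<Longrightarrow> substructure fa ra (induced U (carrier A)) A"
  using substructure_is_struct[of fa ra A U]
  unfolding substructure_def is_struct_def closed_under_def by simp

lemma generated_substructure:
  assumes U: "is_struct fa ra U" and A: "substructure fa ra A U" and S: "S \<subseteq> carrier A"
  shows "generated fa A S = generated fa U S"
proof -
  have AU: "carrier A \<subseteq> carrier U" "closed_under fa U (carrier A)"
    using A unfolding substructure_def by blast+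
  have closed_iff: "closed_under fa A X \<longleftrightarrow> closed_under fa U X" if X: "X \<subseteq> carrier A" for X
  proof -
    have "fun_of A f xs = fun_of U f xs" if "xs \<in> tuples X (fa f)" for f xs
      using A tuples_mono[OF X that] unfolding substructure_def by blast
    then show ?thesis unfolding closed_under_def by auto
  qed
  have GU: "generated fa U S \<subseteq> carrier A"
    using AU S by (intro generated_least) auto
  have GA: "generated fa A S \<subseteq> carrier A"
    using substructure_is_struct[OF A] S by (rule generated_subset_carrier)
  show ?thesis
  proof (rule antisym)
    show "generated fa A S \<subseteq> generated fa U S"
      using GU closed_iff[OF GU] closed_under_generated[of fa U S]
      by (intro generated_least[OF generated_superset]) auto
    show "generated fa U S \<subseteq> generated fa A S"
      using GA AU closed_iff[OF GA] closed_under_generated[of fa A S]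
      by (intro generated_least[OF generated_superset]) auto
  qed
qed

lemma is_hom_comp:
  assumes g: "is_hom fa ra A B g" and h: "is_hom fa ra B C h"
  shows "is_hom fa ra A C (h \<circ> g)"
proof -
  have gt: "map g xs \<in> tuples (carrier B) n" if "xs \<in> tuples (carrier A) n" for xs n
    using that g unfolding is_hom_def by (intro tuples_map) auto
  show ?thesis
    using g h gt unfolding is_hom_def by (auto simp flip: map_map)
qed

lemma is_emb_comp:
  assumes g: "is_emb fa ra A B g" and h: "is_emb fa ra B C h"
  shows "is_emb fa ra A C (h \<circ> g)"
proof -
  have gA: "g ` carrier A \<subseteq> carrier B" using g unfolding is_emb_def is_hom_def by auto
  have gt: "map g xs \<in> tuples (carrier B) n" if "xs \<in> tuples (carrier A) n" for xs n
    using that gA by (intro tuples_map) auto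
  have "inj_on (h \<circ> g) (carrier A)"
    using g h gA unfolding is_emb_def by (meson comp_inj_on inj_on_subset)
  then show ?thesis
    using is_hom_comp[of fa ra A B g C h] g h gt unfolding is_emb_def by (simp flip: map_map)
qed

lemma is_hom_restrict:
  assumes B: "substructure fa ra B T" and h: "is_hom fa ra T X h"
  shows "is_hom fa ra B X h"
proof -
  have BT: "carrier B \<subseteq> carrier T" using B unfolding substructure_def by blast
  have fB: "fun_of B f xs = fun_of T f xs" if "xs \<in> tuples (carrier B) (fa f)" for f xs
    using B that unfolding substructure_def by blast
  have rB: "rel_of B r xs = rel_of T r xs" if "xs \<in> tuples (carrier B) (ra r)" for r xs
    using B that unfolding substructure_def by blast
  show ?thesis unfolding is_hom_def
  proof (intro conjI allI ballI impI)
    fix f xs assume "xs \<in> tuples (carrier B) (fa f)"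
    then show "h (fun_of B f xs) = fun_of X f (map h xs)"
      using h tuples_mono[OF BT] fB unfolding is_hom_def by auto
  next
    fix r xs assume "xs \<in> tuples (carrier B) (ra r)" "rel_of B r xs"
    then show "rel_of X r (map h xs)"
      using h tuples_mono[OF BT] rB unfolding is_hom_def by auto
  qed (use h BT in \<open>auto simp: is_hom_def\<close>)
qed

lemma is_emb_restrict:
  assumes B: "substructure fa ra B T" and h: "is_emb fa ra T X h"
  shows "is_emb fa ra B X h"
proof -
  have BT: "carrier B \<subseteq> carrier T" using B unfolding substructure_def by blast
  have "is_hom fa ra B X h" using is_hom_restrict[OF B] h unfolding is_emb_def by blast
  moreover have "inj_on h (carrier B)"
    using h BT unfolding is_emb_def by (blast intro: inj_on_subset)
  moreover have "rel_of B r xs" if "xs \<in> tuples (carrier B) (ra r)" "rel_of X r (map h xs)" for r xs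
    using B h tuples_mono[OF BT that(1)] that unfolding substructure_def is_emb_def by blast
  ultimately show ?thesis unfolding is_emb_def by blast
qed

lemma is_hom_into_superstructure:
  assumes Y: "substructure fa ra Y U" and h: "is_hom fa ra X Y h"
  shows "is_hom fa ra X U h"
proof -
  have ht: "map h xs \<in> tuples (carrier Y) n" if "xs \<in> tuples (carrier X) n" for xs n
    using that h unfolding is_hom_def by (intro tuples_map) auto
  have fY: "fun_of Y f xs = fun_of U f xs" if "xs \<in> tuples (carrier Y) (fa f)" for f xs
    using Y that unfolding substructure_def by blast
  have rY: "rel_of Y r xs = rel_of U r xs" if "xs \<in> tuples (carrier Y) (ra r)" for r xs
    using Y that unfolding substructure_def by blast
  have YU: "carrier Y \<subseteq> carrier U" using Y unfolding substructure_def by blast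
  show ?thesis unfolding is_hom_def
  proof (intro conjI allI ballI impI)
    fix f xs assume "xs \<in> tuples (carrier X) (fa f)"
    then show "h (fun_of X f xs) = fun_of U f (map h xs)"
      using h ht fY unfolding is_hom_def by auto
  next
    fix r xs assume "xs \<in> tuples (carrier X) (ra r)" "rel_of X r xs"
    then show "rel_of U r (map h xs)"
      using h ht rY unfolding is_hom_def by auto
  qed (use h YU in \<open>auto simp: is_hom_def\<close>)
qed

lemma is_emb_into_superstructure:
  assumes Y: "substructure fa ra Y U" and h: "is_emb fa ra X Y h"
  shows "is_emb fa ra X U h"
proof -
  have ht: "map h xs \<in> tuples (carrier Y) n" if "xs \<in> tuples (carrier X) n" for xs n
    using that h unfolding is_emb_def is_hom_def by (intro tuples_map) auto
  have rY: "rel_of Y r ys = rel_of U r ys" if "ys \<in> tuples (carrier Y) (ra r)" for r ys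
    using Y that unfolding substructure_def by blast
  show ?thesis
    using is_hom_into_superstructure[OF Y] h ht unfolding is_emb_def by (auto simp: rY)
qed

lemma is_emb_into_substructure:
  assumes Y: "substructure fa ra Y U" and h: "is_emb fa ra X U h"
    and im: "h ` carrier X \<subseteq> carrier Y"
  shows "is_emb fa ra X Y h"
proof -
  have ht: "map h xs \<in> tuples (carrier Y) n" if "xs \<in> tuples (carrier X) n" for xs n
    using that im by (intro tuples_map) auto
  show ?thesis using Y h im ht unfolding substructure_def is_emb_def is_hom_def by auto
qed

lemma is_hom_into_substructure:
  assumes Y: "substructure fa ra Y U" and h: "is_hom fa ra X U h"
    and im: "h ` carrier X \<subseteq> carrier Y"
  shows "is_hom fa ra X Y h"
proof -
  have ht: "map h xs \<in> tuples (carrier Y) n" if "xs \<in> tuples (carrier X) n" for xs n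
    using that im by (intro tuples_map) auto
  show ?thesis using Y h im ht unfolding substructure_def is_hom_def by auto
qed

lemma is_iso_inv_into:
  assumes A: "is_struct fa ra A" and h: "is_iso fa ra A B h"
  shows "is_iso fa ra B A (inv_into (carrier A) h)"
proof -
  have inj: "inj_on h (carrier A)" and im: "h ` carrier A = carrier B"
    and hom: "is_hom fa ra A B h"
    and refl: "\<forall>r. \<forall>xs\<in>tuples (carrier A) (ra r). rel_of B r (map h xs) \<longrightarrow> rel_of A r xs"
    using h unfolding is_iso_def is_emb_def by auto
  define g where "g = inv_into (carrier A) h"
  have bij: "bij_betw g (carrier B) (carrier A)"
    unfolding g_def using inj im by (metis bij_betw_imageI bij_betw_inv_into)
  have gt: "map g ys \<in> tuples (carrier A) n" "map h (map g ys) = ys"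
    if "ys \<in> tuples (carrier B) n" for ys n
    using tuples_inv_into[of ys h "carrier A" n] that im unfolding g_def by auto
  have fun_eq: "g (fun_of B f ys) = fun_of A f (map g ys)"
    if ys: "ys \<in> tuples (carrier B) (fa f)" for f ys
  proof -
    have "fun_of B f ys = h (fun_of A f (map g ys))"
      using hom gt[OF ys] unfolding is_hom_def by metis
    moreover have "fun_of A f (map g ys) \<in> carrier A"
      using A gt(1)[OF ys] unfolding is_struct_def closed_under_def by blast
    ultimately show ?thesis using inj unfolding g_def by simp
  qed
  have rel: "rel_of A r (map g ys) \<longleftrightarrow> rel_of B r ys" if ys: "ys \<in> tuples (carrier B) (ra r)" for r ys
    using hom refl gt[OF ys] unfolding is_hom_def by metis
  show ?thesis unfolding g_def[symmetric] is_iso_def is_emb_def is_hom_def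
    using bij fun_eq rel by (auto simp: bij_betw_def)
qed

lemma is_aut_id: "is_aut fa ra U id"
  unfolding is_aut_def is_iso_def is_emb_def is_hom_def by auto

lemma hom_image_closed:
  assumes A: "is_struct fa ra A" and h: "is_hom fa ra A U h"
  shows "closed_under fa U (h ` carrier A)"
  unfolding closed_under_def
proof (intro allI ballI)
  fix f ys assume ys: "ys \<in> tuples (h ` carrier A) (fa f)"
  define xs where "xs = map (inv_into (carrier A) h) ys"
  have xs: "xs \<in> tuples (carrier A) (fa f)" "map h xs = ys"
    using tuples_inv_into[OF ys] unfolding xs_def by auto
  then have "fun_of U f ys = h (fun_of A f xs)" using h unfolding is_hom_def by auto
  moreover have "fun_of A f xs \<in> carrier A"
    using A xs unfolding is_struct_def closed_under_def by auto
  ultimately show "fun_of U f ys \<in> h ` carrier A" by auto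
qed

lemma generated_hom_image:
  assumes U: "is_struct fa ra U" and A: "is_struct fa ra A" and h: "is_hom fa ra A U h"
    and S: "S \<subseteq> carrier A" "generated fa A S = carrier A"
  shows "generated fa U (h ` S) = h ` carrier A"
proof (rule antisym)
  have hA: "h ` carrier A \<subseteq> carrier U" using h unfolding is_hom_def by auto
  then show "generated fa U (h ` S) \<subseteq> h ` carrier A"
    using S hom_image_closed[OF A h] by (intro generated_least) auto
  define G where "G = generated fa U (h ` S)"
  define X where "X = {x \<in> carrier A. h x \<in> G}"
  have "closed_under fa A X"
    unfolding closed_under_def
  proof (intro allI ballI)
    fix f xs assume xs: "xs \<in> tuples X (fa f)"
    then have xsA: "xs \<in> tuples (carrier A) (fa f)"
      by (rule tuples_mono[rotated]) (auto simp: X_def)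
    have "map h xs \<in> tuples G (fa f)" using xs by (intro tuples_map) (auto simp: X_def)
    then have "fun_of U f (map h xs) \<in> G"
      using closed_under_generated[of fa U "h ` S"] unfolding G_def closed_under_def by blast
    moreover have "h (fun_of A f xs) = fun_of U f (map h xs)"
      using h xsA unfolding is_hom_def by auto
    moreover have "fun_of A f xs \<in> carrier A"
      using A xsA unfolding is_struct_def closed_under_def by auto
    ultimately show "fun_of A f xs \<in> X" unfolding X_def by auto
  qed
  moreover have "S \<subseteq> X" using S generated_superset[of "h ` S" fa U] unfolding X_def G_def by auto
  ultimately have "generated fa A S \<subseteq> X" by (intro generated_least) (auto simp: X_def)
  then show "h ` carrier A \<subseteq> generated fa U (h ` S)" using S unfolding X_def G_def by auto
qed

lemma is_emb_cong:
  assumes A: "is_struct fa ra A" and gh: "\<And>x. x \<in> carrier A \<Longrightarrow> g x = h x"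
  shows "is_emb fa ra A B g \<longleftrightarrow> is_emb fa ra A B h"
proof -
  have map_eq: "map g xs = map h xs" if "xs \<in> tuples (carrier A) n" for xs n
    using that gh unfolding tuples_def by (auto intro: map_cong)
  have fun_eq: "g (fun_of A f xs) = h (fun_of A f xs)" if "xs \<in> tuples (carrier A) (fa f)" for f xs
    using A that gh unfolding is_struct_def closed_under_def by blast
  show ?thesis
    unfolding is_emb_def is_hom_def by (simp add: map_eq fun_eq gh cong: ball_cong inj_on_cong)
qed

lemma is_emb_if_locally:
  assumes local: "\<And>F. finite F \<Longrightarrow> F \<subseteq> carrier U \<Longrightarrow>
      \<exists>C. F \<subseteq> C \<and> is_emb fa ra (induced U C) B h"
  shows "is_emb fa ra U B h"
proof -
  have emb_on: "\<exists>C. xs \<in> tuples C n \<and> is_emb fa ra (induced U C) B h"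
    if "xs \<in> tuples (carrier U) n" for xs n
    using that local[of "set xs"] unfolding tuples_def by blast
  show ?thesis unfolding is_emb_def is_hom_def
  proof (intro conjI allI ballI impI)
    fix x assume "x \<in> carrier U"
    then show "h x \<in> carrier B"
      using local[of "{x}"] unfolding is_emb_def is_hom_def by auto
  next
    fix f xs assume "xs \<in> tuples (carrier U) (fa f)"
    then obtain C where "xs \<in> tuples C (fa f)" "is_emb fa ra (induced U C) B h"
      using emb_on by blast
    then show "h (fun_of U f xs) = fun_of B f (map h xs)" unfolding is_emb_def is_hom_def by simp
  next
    fix r xs assume "xs \<in> tuples (carrier U) (ra r)" "rel_of U r xs"
    moreover obtain C where "xs \<in> tuples C (ra r)" "is_emb fa ra (induced U C) B h"
      using emb_on calculation(1) by blast
    ultimately show "rel_of B r (map h xs)" unfolding is_emb_def is_hom_def by simp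
  next
    fix r xs assume "xs \<in> tuples (carrier U) (ra r)" "rel_of B r (map h xs)"
    moreover obtain C where "xs \<in> tuples C (ra r)" "is_emb fa ra (induced U C) B h"
      using emb_on calculation(1) by blast
    ultimately show "rel_of U r xs" unfolding is_emb_def by simp
  next
    show "inj_on h (carrier U)"
    proof (rule inj_onI)
      fix x y assume "x \<in> carrier U" "y \<in> carrier U" "h x = h y"
      then show "x = y"
        using local[of "{x, y}"] unfolding is_emb_def by (auto dest: inj_onD)
    qed
  qed
qed

subsection \<open>Finitely generated partial embeddings\<close>

definition fg_subuniverse :: "('f \<Rightarrow> nat) \<Rightarrow> ('a, 'f, 'r) struct \<Rightarrow> 'a set \<Rightarrow> bool" where
  "fg_subuniverse fa U C \<longleftrightarrow> (\<exists>F. finite F \<and> F \<subseteq> carrier U \<and> generated fa U F = C)"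

lemma fg_subuniverse_subset:
  "is_struct fa ra U \<Longrightarrow> fg_subuniverse fa U C \<Longrightarrow> C \<subseteq> carrier U"
  unfolding fg_subuniverse_def using generated_subset_carrier by blast

lemma fg_subuniverse_closed_under: "fg_subuniverse fa U C \<Longrightarrow> closed_under fa U C"
  unfolding fg_subuniverse_def using closed_under_generated by blast

lemma fg_subuniverse_induced:
  assumes U: "is_struct fa ra U" and C: "fg_subuniverse fa U C"
  shows "substructure fa ra (induced U C) U" "fin_gen fa (induced U C)"
proof -
  obtain F where F: "finite F" "F \<subseteq> carrier U" "generated fa U F = C"
    using C unfolding fg_subuniverse_def by blast
  show sub: "substructure fa ra (induced U C) U"
    using fg_subuniverse_subset[OF U C] closed_under_generated[of fa U F] F(3)
    by (intro induced_substructure) auto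
  have "F \<subseteq> C" using generated_superset[of F fa U] F(3) by blast
  then have "generated fa (induced U C) F = C"
    using generated_substructure[OF U sub] F(3) by simp
  then show "fin_gen fa (induced U C)"
    unfolding fin_gen_def using F \<open>F \<subseteq> C\<close> by auto
qed

lemma fg_subuniverse_carrier:
  assumes U: "is_struct fa ra U" and A: "substructure fa ra A U" "fin_gen fa A"
  shows "fg_subuniverse fa U (carrier A)"
proof -
  obtain S where S: "finite S" "S \<subseteq> carrier A" "generated fa A S = carrier A"
    using A(2) unfolding fin_gen_def by blast
  moreover have "carrier A \<subseteq> carrier U" using A(1) unfolding substructure_def by blast
  ultimately show ?thesis
    unfolding fg_subuniverse_def using generated_substructure[OF U A(1) S(2)] by auto
qed

lemma fg_subuniverse_hom_image:
  assumes U: "is_struct fa ra U" and A: "substructure fa ra A U" "fin_gen fa A"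
    and h: "is_hom fa ra A U h"
  shows "fg_subuniverse fa U (h ` carrier A)"
proof -
  obtain S where S: "finite S" "S \<subseteq> carrier A" "generated fa A S = carrier A"
    using A(2) unfolding fin_gen_def by blast
  have "h ` S \<subseteq> carrier U" using S(2) h unfolding is_hom_def by auto
  then show ?thesis
    unfolding fg_subuniverse_def
    using generated_hom_image[OF U substructure_is_struct[OF A(1)] h S(2,3)] S(1) by blast
qed

lemma fg_subuniverse_insert:
  assumes U: "is_struct fa ra U" and C: "fg_subuniverse fa U C" and x: "x \<in> carrier U"
  obtains D where "fg_subuniverse fa U D" "C \<subseteq> D" "x \<in> D"
proof -
  obtain F where F: "finite F" "F \<subseteq> carrier U" "generated fa U F = C"
    using C unfolding fg_subuniverse_def by blast
  define D where "D = generated fa U (insert x F)"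
  have "fg_subuniverse fa U D" unfolding fg_subuniverse_def D_def using F x by blast
  moreover have "C \<subseteq> D" unfolding D_def F(3)[symmetric]
    using F x by (intro generated_mono[OF U]) auto
  moreover have "x \<in> D" unfolding D_def using generated_superset[of "insert x F" fa U] by blast
  ultimately show thesis by (rule that)
qed

text \<open>Partial maps are pairs of a domain and a total function whose values off the domain are
  irrelevant.\<close>

definition fg_partial_emb ::
    "('f \<Rightarrow> nat) \<Rightarrow> ('r \<Rightarrow> nat) \<Rightarrow> ('a, 'f, 'r) struct \<Rightarrow> 'a set \<times> ('a \<Rightarrow> 'a) \<Rightarrow> bool" where
  "fg_partial_emb fa ra U s \<longleftrightarrow>
     fg_subuniverse fa U (fst s) \<and> is_emb fa ra (induced U (fst s)) U (snd s)"

definition extends_pemb :: "'a set \<times> ('a \<Rightarrow> 'b) \<Rightarrow> 'a set \<times> ('a \<Rightarrow> 'b) \<Rightarrow> bool" where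
  "extends_pemb s s' \<longleftrightarrow> fst s \<subseteq> fst s' \<and> (\<forall>x\<in>fst s. snd s' x = snd s x)"

definition pemb_inverse :: "'a set \<times> ('a \<Rightarrow> 'b) \<Rightarrow> 'b set \<times> ('b \<Rightarrow> 'a)" where
  "pemb_inverse s = (snd s ` fst s, inv_into (fst s) (snd s))"

lemma extends_pemb_refl: "extends_pemb s s"
  unfolding extends_pemb_def by auto

lemma extends_pemb_trans: "extends_pemb s1 s2 \<Longrightarrow> extends_pemb s2 s3 \<Longrightarrow> extends_pemb s1 s3"
  unfolding extends_pemb_def by auto

lemma fg_partial_emb_iso:
  assumes U: "is_struct fa ra U" and s: "fg_partial_emb fa ra U (C, \<phi>)"
  shows "fg_subuniverse fa U (\<phi> ` C)" "is_iso fa ra (induced U C) (induced U (\<phi> ` C)) \<phi>"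
proof -
  have C: "fg_subuniverse fa U C" and \<phi>: "is_emb fa ra (induced U C) U \<phi>"
    using s unfolding fg_partial_emb_def by auto
  note CU = fg_subuniverse_induced[OF U C]
  show im: "fg_subuniverse fa U (\<phi> ` C)"
    using fg_subuniverse_hom_image[OF U CU] \<phi> unfolding is_emb_def by simp
  show "is_iso fa ra (induced U C) (induced U (\<phi> ` C)) \<phi>"
    unfolding is_iso_def
    using is_emb_into_substructure[OF fg_subuniverse_induced(1)[OF U im] \<phi>] by simp
qed

lemma fg_partial_emb_inverse:
  assumes U: "is_struct fa ra U" and s: "fg_partial_emb fa ra U (C, \<phi>)"
  shows "fg_partial_emb fa ra U (pemb_inverse (C, \<phi>))"
proof -
  note iso = fg_partial_emb_iso[OF U s]
  have C: "fg_subuniverse fa U C" using s unfolding fg_partial_emb_def by simp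
  have "is_iso fa ra (induced U (\<phi> ` C)) (induced U C) (inv_into C \<phi>)"
    using is_iso_inv_into[OF _ iso(2)] substructure_is_struct[OF fg_subuniverse_induced(1)[OF U C]]
    by simp
  then show ?thesis
    unfolding fg_partial_emb_def pemb_inverse_def is_iso_def
    using is_emb_into_superstructure[OF fg_subuniverse_induced(1)[OF U C]] iso(1) by auto
qed

lemma extends_pemb_inverse:
  assumes \<phi>: "inj_on \<phi> C" and \<psi>: "inj_on \<psi> D"
    and ext: "extends_pemb (pemb_inverse (C, \<phi>)) (D, \<psi>)"
  shows "extends_pemb (C, \<phi>) (pemb_inverse (D, \<psi>))"
proof -
  have D: "\<phi> c \<in> D" "\<psi> (\<phi> c) = c" if "c \<in> C" for c
    using ext that \<phi> unfolding extends_pemb_def pemb_inverse_def by auto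
  have "c \<in> \<psi> ` D" "inv_into D \<psi> c = \<phi> c" if "c \<in> C" for c
    using D[OF that] \<psi> by (force, simp add: inv_into_f_eq)
  then show ?thesis unfolding extends_pemb_def pemb_inverse_def by auto
qed

subsection \<open>Back and forth\<close>

locale emb_chain =
  fixes fa :: "'f \<Rightarrow> nat" and ra :: "'r \<Rightarrow> nat" and U :: "('a, 'f, 'r) struct"
    and C :: "nat \<Rightarrow> 'a set" and \<phi> :: "nat \<Rightarrow> 'a \<Rightarrow> 'a"
  assumes stage_subset: "C n \<subseteq> carrier U"
    and stage_closed: "closed_under fa U (C n)"
    and stage_emb: "is_emb fa ra (induced U (C n)) U (\<phi> n)"
    and stage_extends: "extends_pemb (C n, \<phi> n) (C (Suc n), \<phi> (Suc n))"
    and exhausts_domain: "carrier U \<subseteq> (\<Union>n. C n)"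
    and exhausts_range: "carrier U \<subseteq> (\<Union>n. \<phi> n ` C n)"
begin

lemma extends_le: "m \<le> n \<Longrightarrow> extends_pemb (C m, \<phi> m) (C n, \<phi> n)"
proof (induction n rule: dec_induct)
  case base then show ?case by (rule extends_pemb_refl)
next
  case (step n) then show ?case using extends_pemb_trans stage_extends by blast
qed

lemma finite_subset_stage: "finite F \<Longrightarrow> F \<subseteq> carrier U \<Longrightarrow> \<exists>n. F \<subseteq> C n"
proof (induction F rule: finite_induct)
  case empty then show ?case by blast
next
  case (insert x F)
  then obtain m k where "F \<subseteq> C m" "x \<in> C k" using exhausts_domain by blast
  then have "insert x F \<subseteq> C (max m k)"
    using extends_le[of m "max m k"] extends_le[of k "max m k"] unfolding extends_pemb_def by auto
  then show ?case by blast
qed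

definition limit :: "'a \<Rightarrow> 'a" where
  "limit x = \<phi> (LEAST n. x \<in> C n) x"

lemma limit_eq: "x \<in> C n \<Longrightarrow> limit x = \<phi> n x"
proof -
  assume x: "x \<in> C n"
  define m where "m = (LEAST n. x \<in> C n)"
  have "x \<in> C m" "m \<le> n" unfolding m_def using x by (auto intro: LeastI Least_le)
  then show ?thesis using extends_le unfolding limit_def m_def[symmetric] extends_pemb_def by auto
qed

lemma limit_is_aut: "is_aut fa ra U limit"
proof -
  have stage: "is_emb fa ra (induced U (C n)) U limit" for n
  proof -
    have "is_struct fa ra (induced U (C n))"
      using stage_closed unfolding is_struct_def closed_under_def by simp
    then show ?thesis using is_emb_cong[of fa ra "induced U (C n)" limit "\<phi> n"] stage_emb limit_eq
      by simp
  qed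
  have emb: "is_emb fa ra U U limit"
    by (rule is_emb_if_locally) (use finite_subset_stage stage in blast)
  have "carrier U \<subseteq> limit ` carrier U"
  proof
    fix y assume "y \<in> carrier U"
    then obtain n c where "c \<in> C n" "y = \<phi> n c" using exhausts_range by blast
    then have "y = limit c" "c \<in> carrier U" using limit_eq stage_subset by auto
    then show "y \<in> limit ` carrier U" by blast
  qed
  then show ?thesis using emb unfolding is_aut_def is_iso_def is_emb_def is_hom_def by blast
qed

end

lemma emb_chain_fg_partial_embs:
  assumes U: "is_struct fa ra U" and st: "\<And>n. fg_partial_emb fa ra U (st n)"
    and ext: "\<And>n. extends_pemb (st n) (st (Suc n))"
    and dom: "\<And>x. x \<in> carrier U \<Longrightarrow> \<exists>n. x \<in> fst (st n)"
    and ran: "\<And>x. x \<in> carrier U \<Longrightarrow> \<exists>n. x \<in> snd (st n) ` fst (st n)"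
  shows "emb_chain fa ra U (\<lambda>n. fst (st n)) (\<lambda>n. snd (st n))"
proof
  fix n
  show "fst (st n) \<subseteq> carrier U" "closed_under fa U (fst (st n))"
    "is_emb fa ra (induced U (fst (st n))) U (snd (st n))"
    using st[of n] fg_subuniverse_subset[OF U] fg_subuniverse_closed_under[of fa U "fst (st n)"]
    unfolding fg_partial_emb_def by simp_all
  show "extends_pemb (fst (st n), snd (st n)) (fst (st (Suc n)), snd (st (Suc n)))"
    using ext[of n] by simp
qed (use dom ran in blast)+

lemma pemb_back:
  assumes U: "is_struct fa ra U"
    and forth: "\<And>s x. fg_partial_emb fa ra U s \<Longrightarrow> x \<in> carrier U \<Longrightarrow>
      \<exists>s'. fg_partial_emb fa ra U s' \<and> extends_pemb s s' \<and> x \<in> fst s'"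
    and s: "fg_partial_emb fa ra U s" and y: "y \<in> carrier U"
  shows "\<exists>s'. fg_partial_emb fa ra U s' \<and> extends_pemb s s' \<and> y \<in> snd s' ` fst s'"
proof -
  obtain C \<phi> where s_eq: "s = (C, \<phi>)" by (cases s)
  obtain t where t: "fg_partial_emb fa ra U t" "extends_pemb (pemb_inverse (C, \<phi>)) t" "y \<in> fst t"
    using forth[OF fg_partial_emb_inverse[OF U s[unfolded s_eq]] y] by blast
  obtain D \<psi> where t_eq: "t = (D, \<psi>)" by (cases t)
  have inj: "inj_on \<phi> C" "inj_on \<psi> D"
    using s t(1) unfolding s_eq t_eq fg_partial_emb_def is_emb_def by auto
  have "fg_partial_emb fa ra U (pemb_inverse (D, \<psi>))"
    using fg_partial_emb_inverse[OF U t(1)[unfolded t_eq]] .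
  moreover have "extends_pemb s (pemb_inverse (D, \<psi>))"
    using extends_pemb_inverse[OF inj t(2)[unfolded t_eq]] s_eq by simp
  moreover have "y \<in> snd (pemb_inverse (D, \<psi>)) ` fst (pemb_inverse (D, \<psi>))"
    using t(3) inj(2) unfolding t_eq pemb_inverse_def by (simp add: inv_into_image_cancel)
  ultimately show ?thesis by blast
qed

lemma pemb_back_and_forth_step:
  assumes U: "is_struct fa ra U"
    and forth: "\<And>s x. fg_partial_emb fa ra U s \<Longrightarrow> x \<in> carrier U \<Longrightarrow>
      \<exists>s'. fg_partial_emb fa ra U s' \<and> extends_pemb s s' \<and> x \<in> fst s'"
    and s: "fg_partial_emb fa ra U s" and x: "x \<in> carrier U"
  shows "\<exists>s'. fg_partial_emb fa ra U s' \<and> extends_pemb s s' \<and> x \<in> fst s' \<and> x \<in> snd s' ` fst s'"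
proof -
  obtain s1 where s1: "fg_partial_emb fa ra U s1" "extends_pemb s s1" "x \<in> fst s1"
    using forth[OF s x] by blast
  obtain s2 where s2: "fg_partial_emb fa ra U s2" "extends_pemb s1 s2" "x \<in> snd s2 ` fst s2"
    using pemb_back[OF U forth s1(1) x] by blast
  have "x \<in> fst s2" using s1(3) s2(2) unfolding extends_pemb_def by blast
  then show ?thesis using s2 extends_pemb_trans[OF s1(2) s2(2)] by blast
qed

lemma back_and_forth:
  assumes U: "is_struct fa ra U" and cU: "countable (carrier U)"
    and forth: "\<And>s x. fg_partial_emb fa ra U s \<Longrightarrow> x \<in> carrier U \<Longrightarrow>
      \<exists>s'. fg_partial_emb fa ra U s' \<and> extends_pemb s s' \<and> x \<in> fst s'"
    and s: "fg_partial_emb fa ra U s"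
  shows "\<exists>\<alpha>. is_aut fa ra U \<alpha> \<and> (\<forall>x\<in>fst s. \<alpha> x = snd s x)"
proof (cases "carrier U = {}")
  case True
  then have "fst s = {}" using s fg_subuniverse_subset[OF U] unfolding fg_partial_emb_def by blast
  then show ?thesis using is_aut_id by blast
next
  case False
  define en where "en = from_nat_into (carrier U)"
  have en: "en n \<in> carrier U" "range en = carrier U" for n
    unfolding en_def using False cU by (auto intro: from_nat_into range_from_nat_into)
  define P where "P t x t' \<longleftrightarrow> fg_partial_emb fa ra U t' \<and> extends_pemb t t' \<and>
    x \<in> fst t' \<and> x \<in> snd t' ` fst t'" for t x t'
  define st where "st = rec_nat s (\<lambda>n t. SOME t'. P t (en n) t')"
  have st: "fg_partial_emb fa ra U (st n) \<and> P (st n) (en n) (st (Suc n))" for n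
  proof (induction n)
    have step: "P t (en n) (SOME t'. P t (en n) t')" if "fg_partial_emb fa ra U t" for t n
      using someI_ex[OF pemb_back_and_forth_step[OF U forth that en(1)]] unfolding P_def .
    case 0 show ?case using s step[OF s] unfolding st_def by simp
    case (Suc n) then show ?case using step unfolding P_def st_def by simp
  qed
  interpret emb_chain fa ra U "\<lambda>n. fst (st n)" "\<lambda>n. snd (st n)"
  proof (rule emb_chain_fg_partial_embs[OF U])
    fix n
    show "fg_partial_emb fa ra U (st n)" "extends_pemb (st n) (st (Suc n))"
      using st[of n] unfolding P_def by simp_all
  next
    fix x assume "x \<in> carrier U"
    then obtain n where "x = en n" using en(2) by blast
    then show "\<exists>n. x \<in> fst (st n)" "\<exists>n. x \<in> snd (st n) ` fst (st n)"
      using st[of n] unfolding P_def by blast+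
  qed
  have "st 0 = s" unfolding st_def by simp
  then show ?thesis using limit_is_aut limit_eq[of _ 0] by auto
qed

subsection \<open>Universal homogeneous endomorphisms\<close>

lemma universal_homogeneous_endoD:
  assumes "universal_homogeneous_endo fa ra U u"
  shows "is_endo fa ra U u"
    and "\<And>A h. in_age_closure fa ra U A \<Longrightarrow> is_hom fa ra A U h \<Longrightarrow>
      \<exists>\<iota>. is_emb fa ra A U \<iota> \<and> (\<forall>x\<in>carrier A. h x = u (\<iota> x))"
    and "\<And>A \<iota>. substructure fa ra A U \<Longrightarrow> fin_gen fa A \<Longrightarrow> is_emb fa ra A U \<iota> \<Longrightarrow>
      (\<And>x. x \<in> carrier A \<Longrightarrow> u (\<iota> x) = u x) \<Longrightarrow>
      \<exists>\<alpha>. is_aut fa ra U \<alpha> \<and> (\<forall>x\<in>carrier U. u (\<alpha> x) = u x) \<and> (\<forall>x\<in>carrier A. \<alpha> x = \<iota> x)"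
  using assms unfolding universal_homogeneous_endo_def by simp_all

lemma homogeneousD:
  "homogeneous fa ra U \<Longrightarrow> substructure fa ra A U \<Longrightarrow> fin_gen fa A \<Longrightarrow>
    substructure fa ra B U \<Longrightarrow> fin_gen fa B \<Longrightarrow> is_iso fa ra A B i \<Longrightarrow>
    \<exists>\<alpha>. is_aut fa ra U \<alpha> \<and> (\<forall>x\<in>carrier A. \<alpha> x = i x)"
  unfolding homogeneous_def by simp

lemma hom_homogeneousD:
  "hom_homogeneous fa ra U \<Longrightarrow> substructure fa ra A U \<Longrightarrow> fin_gen fa A \<Longrightarrow>
    substructure fa ra B U \<Longrightarrow> fin_gen fa B \<Longrightarrow> is_hom fa ra A B h \<Longrightarrow>
    \<exists>e. is_endo fa ra U e \<and> (\<forall>x\<in>carrier A. e x = h x)"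
  unfolding hom_homogeneous_def by simp

lemma countable_struct_nat_copy:
  fixes fa :: "'f \<Rightarrow> nat" and ra :: "'r \<Rightarrow> nat" and A :: "('a, 'f, 'r) struct"
  assumes A: "is_struct fa ra A" and cA: "countable (carrier A)"
  obtains T :: "(nat, 'f, 'r) struct" and e d where "is_struct fa ra T"
    "is_emb fa ra A T e" "is_emb fa ra T A d" "\<And>x. x \<in> carrier A \<Longrightarrow> d (e x) = x"
proof -
  define e where "e = to_nat_on (carrier A)"
  define d where "d = inv_into (carrier A) e"
  have inj: "inj_on e (carrier A)" unfolding e_def using cA by (rule inj_on_to_nat_on)
  have de: "d (e x) = x" if "x \<in> carrier A" for x using inj that unfolding d_def by simp
  have ed: "e (d n) = n" "d n \<in> carrier A" if "n \<in> e ` carrier A" for n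
    using that unfolding d_def by (auto simp: inv_into_into f_inv_into_f)
  define T :: "(nat, 'f, 'r) struct" where
    "T = \<lparr>carrier = e ` carrier A, fun_of = (\<lambda>f ns. e (fun_of A f (map d ns))),
           rel_of = (\<lambda>r ns. rel_of A r (map d ns))\<rparr>"
  have dt: "map d ns \<in> tuples (carrier A) n" if "ns \<in> tuples (e ` carrier A) n" for ns n
    using that ed by (intro tuples_map) auto
  have de_map: "map (d \<circ> e) xs = xs" if "xs \<in> tuples (carrier A) n" for xs n
    using that de by (auto simp: tuples_def intro!: map_idI)
  have closed: "fun_of A f xs \<in> carrier A" if "xs \<in> tuples (carrier A) (fa f)" for f xs
    using A that unfolding is_struct_def closed_under_def by blast
  have "is_struct fa ra T" unfolding is_struct_def closed_under_def T_def using closed dt by auto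
  moreover have "is_emb fa ra T A d"
    unfolding is_emb_def is_hom_def
  proof (intro conjI allI ballI impI)
    show "inj_on d (carrier T)" unfolding T_def d_def by (simp add: inj_on_inv_into)
  qed (auto simp: T_def ed de dt closed)
  moreover have "is_emb fa ra A T e"
    unfolding is_emb_def is_hom_def using inj by (auto simp: T_def de_map)
  ultimately show thesis using de that by blast
qed

lemma in_age_closure_if_emb:
  assumes T: "is_struct fa ra T" and d: "is_emb fa ra T U d"
  shows "in_age_closure fa ra U T"
  unfolding in_age_closure_def in_age_def
proof (intro conjI allI impI T)
  fix B assume B: "substructure fa ra B T \<and> fin_gen fa B"
  then show "is_struct fa ra B" "fin_gen fa B" using substructure_is_struct by blast+
  show "\<exists>e. is_emb fa ra B U e" using is_emb_restrict[OF _ d] B by blast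
qed

text \<open>The universality clause of the definition only covers structures on \<open>nat\<close>; it is transported
  along a copy.\<close>

lemma universal_homogeneous_endo_factor:
  fixes fa :: "'f \<Rightarrow> nat" and ra :: "'r \<Rightarrow> nat"
  assumes u: "universal_homogeneous_endo fa ra U u"
    and A: "is_struct fa ra A" "countable (carrier A)" "is_emb fa ra A U e0"
    and h: "is_hom fa ra A U h"
  shows "\<exists>\<iota>. is_emb fa ra A U \<iota> \<and> (\<forall>x\<in>carrier A. h x = u (\<iota> x))"
proof -
  obtain T :: "(nat, 'f, 'r) struct" and e d where T: "is_struct fa ra T"
    and e: "is_emb fa ra A T e" and d: "is_emb fa ra T A d"
    and de: "\<And>x. x \<in> carrier A \<Longrightarrow> d (e x) = x"
    using countable_struct_nat_copy[OF A(1,2)] by blast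
  have "in_age_closure fa ra U T"
    using in_age_closure_if_emb[OF T is_emb_comp[OF d A(3)]] .
  moreover have "is_hom fa ra T U (h \<circ> d)" using is_hom_comp[OF _ h] d unfolding is_emb_def by blast
  ultimately obtain \<iota> where \<iota>: "is_emb fa ra T U \<iota>" "\<forall>x\<in>carrier T. (h \<circ> d) x = u (\<iota> x)"
    using universal_homogeneous_endoD(2)[OF u] by blast
  have "h x = u ((\<iota> \<circ> e) x)" if x: "x \<in> carrier A" for x
  proof -
    have "e x \<in> carrier T" using e x unfolding is_emb_def is_hom_def by blast
    then have "(h \<circ> d) (e x) = u (\<iota> (e x))" using \<iota>(2) by blast
    then show ?thesis using de[OF x] by simp
  qed
  then show ?thesis using is_emb_comp[OF e \<iota>(1)] by blast
qed

lemma universal_homogeneous_endo_factor_substructure: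
  assumes U: "countable (carrier U)" and u: "universal_homogeneous_endo fa ra U u"
    and A: "substructure fa ra A U" and h: "is_hom fa ra A U h"
  shows "\<exists>\<iota>. is_emb fa ra A U \<iota> \<and> (\<forall>x\<in>carrier A. h x = u (\<iota> x))"
proof (rule universal_homogeneous_endo_factor[OF u substructure_is_struct[OF A] _ _ h])
  have "carrier A \<subseteq> carrier U" using A unfolding substructure_def by blast
  then show "countable (carrier A)" using U by (rule countable_subset)
  have "is_emb fa ra U U id" using is_aut_id[of fa ra U] unfolding is_aut_def is_iso_def by blast
  then show "is_emb fa ra A U id" by (rule is_emb_restrict[OF A])
qed

lemma homogeneous_imp_hom_homogeneous:
  assumes U: "is_struct fa ra U" "countable (carrier U)"
    and u: "universal_homogeneous_endo fa ra U u" and hom: "homogeneous fa ra U"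
  shows "hom_homogeneous fa ra U"
  unfolding hom_homogeneous_def
proof (intro allI impI, elim conjE)
  fix A B h assume A: "substructure fa ra A U" "fin_gen fa A"
    and B: "substructure fa ra B U" and h: "is_hom fa ra A B h"
  obtain j where j: "is_emb fa ra A U j" "\<forall>x\<in>carrier A. h x = u (j x)"
    using universal_homogeneous_endo_factor_substructure[OF U(2) u A(1)]
      is_hom_into_superstructure[OF B h] by blast
  have im: "fg_subuniverse fa U (j ` carrier A)"
    using fg_subuniverse_hom_image[OF U(1) A] j(1) unfolding is_emb_def by blast
  note im_sub = fg_subuniverse_induced[OF U(1) im]
  have "is_iso fa ra A (induced U (j ` carrier A)) j"
    unfolding is_iso_def using is_emb_into_substructure[OF im_sub(1) j(1)] by simp
  then obtain \<alpha> where \<alpha>: "is_aut fa ra U \<alpha>" "\<forall>x\<in>carrier A. \<alpha> x = j x"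
    using homogeneousD[OF hom A im_sub] by blast
  have "is_hom fa ra U U \<alpha>" using \<alpha>(1) unfolding is_aut_def is_iso_def is_emb_def by blast
  moreover have "is_hom fa ra U U u"
    using universal_homogeneous_endoD(1)[OF u] unfolding is_endo_def .
  ultimately have "is_endo fa ra U (u \<circ> \<alpha>)" unfolding is_endo_def by (rule is_hom_comp)
  moreover have "\<forall>x\<in>carrier A. (u \<circ> \<alpha>) x = h x" using \<alpha>(2) j(2) by simp
  ultimately show "\<exists>e. is_endo fa ra U e \<and> (\<forall>x\<in>carrier A. e x = h x)" by blast
qed

lemma hom_homogeneous_factor_hom:
  assumes U: "is_struct fa ra U" "countable (carrier U)"
    and u: "universal_homogeneous_endo fa ra U u" and hh: "hom_homogeneous fa ra U"
    and A: "substructure fa ra A U" "fin_gen fa A" and B: "substructure fa ra B U" "fin_gen fa B"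
    and i: "is_hom fa ra A B i"
  shows "\<exists>\<kappa>. is_emb fa ra U U \<kappa> \<and> (\<forall>x\<in>carrier A. u (\<kappa> x) = u (i x))"
proof -
  have uB: "is_hom fa ra B U u"
    using is_hom_restrict[OF B(1)] universal_homogeneous_endoD(1)[OF u] unfolding is_endo_def .
  have im: "fg_subuniverse fa U (u ` carrier B)" using fg_subuniverse_hom_image[OF U(1) B uB] .
  note im_sub = fg_subuniverse_induced[OF U(1) im]
  have "is_hom fa ra B (induced U (u ` carrier B)) u"
    using is_hom_into_substructure[OF im_sub(1) uB] by simp
  with i have "is_hom fa ra A (induced U (u ` carrier B)) (u \<circ> i)"
    by (intro is_hom_comp)
  then obtain e where e: "is_endo fa ra U e" "\<forall>x\<in>carrier A. e x = (u \<circ> i) x"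
    using hom_homogeneousD[OF hh A im_sub] by blast
  obtain \<kappa> where \<kappa>: "is_emb fa ra U U \<kappa>" "\<forall>x\<in>carrier U. e x = u (\<kappa> x)"
    using universal_homogeneous_endo_factor_substructure[OF U(2) u substructure_refl[OF U(1)]] e(1)
    unfolding is_endo_def by blast
  have "u (\<kappa> x) = u (i x)" if x: "x \<in> carrier A" for x
  proof -
    have "x \<in> carrier U" using x A(1) unfolding substructure_def by blast
    then have "e x = u (\<kappa> x)" using \<kappa>(2) by blast
    then show ?thesis using e(2) x by simp
  qed
  then show ?thesis using \<kappa>(1) by blast
qed

text \<open>\<open>\<kappa> \<circ> i\<inverse>\<close> is an embedding of \<open>B\<close> with the same \<open>u\<close>-fibres as the inclusion, so the
  homogeneity clause for \<open>u\<close> extends it to an automorphism \<open>\<alpha>\<close>; then \<open>\<alpha>\<inverse> \<circ> \<kappa>\<close> extends \<open>i\<close>.\<close>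

lemma universal_homogeneous_endo_adjust_emb:
  assumes U: "is_struct fa ra U" and u: "universal_homogeneous_endo fa ra U u"
    and A: "substructure fa ra A U" and B: "substructure fa ra B U" "fin_gen fa B"
    and i: "is_iso fa ra A B i"
    and \<kappa>: "is_emb fa ra U U \<kappa>" "\<forall>x\<in>carrier A. u (\<kappa> x) = u (i x)"
  shows "\<exists>\<sigma>. is_emb fa ra U U \<sigma> \<and> (\<forall>x\<in>carrier A. \<sigma> x = i x)"
proof -
  define j where "j = inv_into (carrier A) i"
  have j: "is_iso fa ra B A j" unfolding j_def
    using is_iso_inv_into[OF substructure_is_struct[OF A] i] .
  have i_inj: "inj_on i (carrier A)" and i_onto: "i ` carrier A = carrier B"
    using i unfolding is_iso_def is_emb_def by auto
  have ij: "i (j y) = y" "j y \<in> carrier A" if "y \<in> carrier B" for y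
    using that i_onto unfolding j_def by (auto simp: f_inv_into_f inv_into_into)
  have fibre: "u ((\<kappa> \<circ> j) y) = u y" if y: "y \<in> carrier B" for y
    using \<kappa>(2) ij[OF y] by auto
  have emb: "is_emb fa ra B U (\<kappa> \<circ> j)"
    using is_emb_comp[OF is_emb_into_superstructure[OF A] \<kappa>(1)] j unfolding is_iso_def by blast
  have "\<exists>\<alpha>. is_aut fa ra U \<alpha> \<and> (\<forall>x\<in>carrier U. u (\<alpha> x) = u x) \<and>
      (\<forall>y\<in>carrier B. \<alpha> y = (\<kappa> \<circ> j) y)"
    using universal_homogeneous_endoD(3)[OF u B(1) B(2) emb] fibre by simp
  then obtain \<alpha> where \<alpha>: "is_aut fa ra U \<alpha>" "\<forall>y\<in>carrier B. \<alpha> y = (\<kappa> \<circ> j) y"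
    by blast
  have \<alpha>_inj: "inj_on \<alpha> (carrier U)" using \<alpha>(1) unfolding is_aut_def is_iso_def is_emb_def by blast
  have "is_iso fa ra U U (inv_into (carrier U) \<alpha>)"
    using is_iso_inv_into[OF U] \<alpha>(1) unfolding is_aut_def .
  then have "is_emb fa ra U U (inv_into (carrier U) \<alpha> \<circ> \<kappa>)"
    using is_emb_comp[OF \<kappa>(1)] unfolding is_iso_def by blast
  moreover have "(inv_into (carrier U) \<alpha> \<circ> \<kappa>) x = i x" if x: "x \<in> carrier A" for x
  proof -
    have ix: "i x \<in> carrier B" using x i_onto by blast
    have "\<kappa> x = \<alpha> (i x)" using \<alpha>(2) ix inv_into_f_f[OF i_inj x] unfolding j_def by simp
    moreover have "i x \<in> carrier U" using ix B(1) unfolding substructure_def by blast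
    ultimately show ?thesis using inv_into_f_f[OF \<alpha>_inj] by auto
  qed
  ultimately show ?thesis by blast
qed

lemma hom_homogeneous_iso_extends:
  assumes U: "is_struct fa ra U" "countable (carrier U)"
    and u: "universal_homogeneous_endo fa ra U u" and hh: "hom_homogeneous fa ra U"
    and A: "substructure fa ra A U" "fin_gen fa A" and B: "substructure fa ra B U" "fin_gen fa B"
    and i: "is_iso fa ra A B i"
  shows "\<exists>\<sigma>. is_emb fa ra U U \<sigma> \<and> (\<forall>x\<in>carrier A. \<sigma> x = i x)"
proof -
  have "is_hom fa ra A B i" using i unfolding is_iso_def is_emb_def by blast
  then obtain \<kappa> where "is_emb fa ra U U \<kappa>" "\<forall>x\<in>carrier A. u (\<kappa> x) = u (i x)"
    using hom_homogeneous_factor_hom[OF U u hh A B] by blast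
  then show ?thesis using universal_homogeneous_endo_adjust_emb[OF U(1) u A(1) B i] by blast
qed

lemma hom_homogeneous_forth:
  assumes U: "is_struct fa ra U" "countable (carrier U)"
    and u: "universal_homogeneous_endo fa ra U u" and hh: "hom_homogeneous fa ra U"
    and s: "fg_partial_emb fa ra U s" and x: "x \<in> carrier U"
  shows "\<exists>s'. fg_partial_emb fa ra U s' \<and> extends_pemb s s' \<and> x \<in> fst s'"
proof -
  obtain C \<phi> where s_eq: "s = (C, \<phi>)" by (cases s)
  have C: "fg_subuniverse fa U C" using s unfolding s_eq fg_partial_emb_def by simp
  note iso = fg_partial_emb_iso[OF U(1) s[unfolded s_eq]]
  obtain \<sigma> where \<sigma>: "is_emb fa ra U U \<sigma>" "\<forall>c\<in>C. \<sigma> c = \<phi> c"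
    using hom_homogeneous_iso_extends[OF U u hh fg_subuniverse_induced[OF U(1) C]
        fg_subuniverse_induced[OF U(1) iso(1)] iso(2)] by auto
  obtain D where D: "fg_subuniverse fa U D" "C \<subseteq> D" "x \<in> D"
    using fg_subuniverse_insert[OF U(1) C x] .
  have "fg_partial_emb fa ra U (D, \<sigma>)"
    unfolding fg_partial_emb_def
      using D(1) is_emb_restrict[OF fg_subuniverse_induced(1)[OF U(1) D(1)] \<sigma>(1)]
    by simp
  moreover have "extends_pemb s (D, \<sigma>)" unfolding s_eq extends_pemb_def using D(2) \<sigma>(2) by simp
  ultimately show ?thesis using D(3) by fastforce
qed

lemma hom_homogeneous_imp_homogeneous:
  assumes U: "is_struct fa ra U" "countable (carrier U)"
    and u: "universal_homogeneous_endo fa ra U u" and hh: "hom_homogeneous fa ra U"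
  shows "homogeneous fa ra U"
  unfolding homogeneous_def
proof (intro allI impI, elim conjE)
  fix A B i assume A: "substructure fa ra A U" "fin_gen fa A"
    and B: "substructure fa ra B U" and i: "is_iso fa ra A B i"
  have "is_emb fa ra (induced U (carrier A)) U i"
    using is_emb_restrict[OF induced_carrier_substructure[OF A(1)]]
      is_emb_into_superstructure[OF B] i
    unfolding is_iso_def by blast
  then have "fg_partial_emb fa ra U (carrier A, i)"
    unfolding fg_partial_emb_def using fg_subuniverse_carrier[OF U(1) A] by simp
  then show "\<exists>\<alpha>. is_aut fa ra U \<alpha> \<and> (\<forall>x\<in>carrier A. \<alpha> x = i x)"
    using back_and_forth[OF U hom_homogeneous_forth[OF U u hh]] by fastforce
qed

theorem proposition4p8:
  fixes fa :: "'f \<Rightarrow> nat" and ra :: "'r \<Rightarrow> nat" and U :: "('a, 'f, 'r) struct"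
  assumes "is_struct fa ra U"
    and "countable (carrier U)"
    and "\<exists>u. universal_homogeneous_endo fa ra U u"
  shows "homogeneous fa ra U \<longleftrightarrow> hom_homogeneous fa ra U"
proof -
  obtain u where u: "universal_homogeneous_endo fa ra U u" using assms(3) by blast
  show ?thesis
    using homogeneous_imp_hom_homogeneous[OF assms(1,2) u]
      hom_homogeneous_imp_homogeneous[OF assms(1,2) u] by blast
qed

end
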